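(* Let $m$ be a positive integer, $r\geq 3$, and let $\mathcal{G}$ and $\mathcal{H}$ be $r$-uniform supertrees with $u\in V(\mathcal{G})$ and $v\in V(\mathcal{H})$. Then (i) $\rho\big((\mathcal{G}_u\cdot m\mathcal{H}_v)\cup(m-1)\mathcal{G}\big)=\rho\big((\mathcal{H}_v\cdot m\mathcal{G}_u)\cup(m-1)\mathcal{H}\big)$ and $\rho(\mathcal{G}_u\cdot m\mathcal{H}_v)=\rho(\mathcal{H}_v\cdot m\mathcal{G}_u)$; (ii) $ME\big((\mathcal{G}_u\cdot m\mathcal{H}_v)\cup(m-1)\mathcal{G}\big)=ME\big((\mathcal{H}_v\cdot m\mathcal{G}_u)\cup(m-1)\mathcal{H}\big)$.
   Context: An $r$-uniform supertree is a connected acyclic hypergraph each of whose edges has exactly $r$ vertices. $\cup$ denotes disjoint union and $k\mathcal{G}$ the disjoint union of $k$ copies of $\mathcal{G}$. $\mathcal{G}_u\cdot m\mathcal{H}_v$ is obtained from $\mathcal{G}$ and $m$ disjoint copies of $\mathcal{H}$ by adding $m$ new edges $e_i=\{v_{i,1},\dots,v_{i,r}\}$ ($i=1,\dots,m$), where $v_{i,1}$ is identified with $u$, $v_{i,r}$ with the vertex $v$ of the $i$-th copy of $\mathcal{H}$, and $v_{i,2},\dots,v_{i,r-1}$ are new distinct vertices; $\mathcal{H}_v\cdot m\mathcal{G}_u$ is defined analogously with $(\mathcal{G},u)$ and $(\mathcal{H},v)$ exchanged. For an $r$-uniform hypergraph $\mathcal{K}$ on $n$ vertices, $m(\mathcal{K},k)$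 is the number of sets of $k$ pairwise disjoint edges ($m(\mathcal{K},0)=1$), $\varphi(\mathcal{K},x)=\sum_{k\geq0}(-1)^km(\mathcal{K},k)x^{n-kr}$, and $ME(\mathcal{K})$ is the sum of absolute values of all roots (with multiplicity) of $\varphi(\mathcal{K},x)$. The adjacency tensor has entries $a_{i_1\cdots i_r}=1/(r-1)!$ if $\{i_1,\dots,i_r\}$ is an edge and $0$ otherwise; $\lambda$ is an eigenvalue if some nonzero $x\in\mathbb{C}^n$ satisfies $\sum_{i_2,\dots,i_r}a_{ii_2\cdots i_r}x_{i_2}\cdots x_{i_r}=\lambda x_i^{r-1}$ for all $i$; $\rho(\mathcal{K})$ is the maximum modulus of the eigenvalues. *)

theory Defs
  imports Complex_Main "HOL-Computational_Algebra.Polynomial"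
begin

type_synonym 'a hgraph = "'a set \<times> 'a set set"

definition verts :: "'a hgraph \<Rightarrow> 'a set" where "verts K = fst K"
definition edges :: "'a hgraph \<Rightarrow> 'a set set" where "edges K = snd K"

definition uniform_hg :: "nat \<Rightarrow> 'a hgraph \<Rightarrow> bool" where
  "uniform_hg r K \<longleftrightarrow> finite (verts K) \<and>
     (\<forall>e\<in>edges K. e \<subseteq> verts K \<and> card e = r)"

definition hg_connected :: "'a hgraph \<Rightarrow> bool" where
  "hg_connected K \<longleftrightarrow> (\<forall>x\<in>verts K. \<forall>y\<in>verts K.
     (\<lambda>a b. \<exists>e\<in>edges K. a \<in> e \<and> b \<in> e)\<^sup>*\<^sup>* x y)"

definition hg_has_cycle :: "'a hgraph \<Rightarrow> bool" where
  "hg_has_cycle K \<longleftrightarrow> (\<exists>k::nat. \<exists>vs es. k \<ge> 2 \<and> inj_on vs {..<k} \<and> inj_on es {..<k} \<and>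
     (\<forall>i<k. es i \<in> edges K \<and> vs i \<in> es i \<and> vs (Suc i mod k) \<in> es i))"

definition supertree :: "nat \<Rightarrow> 'a hgraph \<Rightarrow> bool" where
  "supertree r K \<longleftrightarrow> uniform_hg r K \<and> hg_connected K \<and> \<not> hg_has_cycle K"

definition dunion :: "'a hgraph \<Rightarrow> 'b hgraph \<Rightarrow> ('a + 'b) hgraph" where
  "dunion K L = (Inl ` verts K \<union> Inr ` verts L,
                 (\<lambda>e. Inl ` e) ` edges K \<union> (\<lambda>e. Inr ` e) ` edges L)"

definition copies :: "nat \<Rightarrow> 'a hgraph \<Rightarrow> (nat \<times> 'a) hgraph" where
  "copies k K = ({..<k} \<times> verts K,
                 {(\<lambda>x. (i, x)) ` e | i e. i < k \<and> e \<in> edges K})"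

text \<open>The hypergraph G_u . m H_v: vertices Inl g (from G), Inr (Inl (i,h)) (i-th copy of H),
  Inr (Inr (i,j)) (new vertices v_{i,j}, 2 <= j <= r-1, of the new edge e_i).\<close>
definition coalesce :: "nat \<Rightarrow> 'a hgraph \<Rightarrow> 'a \<Rightarrow> nat \<Rightarrow> 'b hgraph \<Rightarrow> 'b
                        \<Rightarrow> ('a + (nat \<times> 'b) + (nat \<times> nat)) hgraph" where
  "coalesce r G u m H v =
    (Inl ` verts G \<union> (\<lambda>(i,h). Inr (Inl (i,h))) ` ({..<m} \<times> verts H)
       \<union> (\<lambda>(i,j). Inr (Inr (i,j))) ` ({..<m} \<times> {2..r-1}),
     (\<lambda>e. Inl ` e) ` edges G
       \<union> {(\<lambda>h. Inr (Inl (i,h))) ` e | i e. i < m \<and> e \<in> edges H}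
       \<union> {{Inl u, Inr (Inl (i,v))} \<union> (\<lambda>j. Inr (Inr (i,j))) ` {2..r-1} | i. i < m})"

definition match_count :: "'a hgraph \<Rightarrow> nat \<Rightarrow> nat" where
  "match_count K k = card {M. M \<subseteq> edges K \<and> card M = k \<and>
      (\<forall>e\<in>M. \<forall>f\<in>M. e \<noteq> f \<longrightarrow> e \<inter> f = {})}"

definition matching_poly :: "nat \<Rightarrow> 'a hgraph \<Rightarrow> complex poly" where
  "matching_poly r K = (\<Sum>k\<in>{..card (verts K) div r}.
      monom ((-1)^k * of_nat (match_count K k)) (card (verts K) - k * r))"

definition matching_energy :: "nat \<Rightarrow> 'a hgraph \<Rightarrow> real" where
  "matching_energy r K = (let p = matching_poly r K in
     (\<Sum>z\<in>{z. poly p z = 0}. of_nat (order z p) * cmod z))"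

definition adj_tensor :: "nat \<Rightarrow> 'a hgraph \<Rightarrow> 'a list \<Rightarrow> complex" where
  "adj_tensor r K is = (if set is \<in> edges K then 1 / of_nat (fact (r - 1)) else 0)"

definition is_eigenvalue :: "nat \<Rightarrow> 'a hgraph \<Rightarrow> complex \<Rightarrow> bool" where
  "is_eigenvalue r K lam \<longleftrightarrow> (\<exists>x :: 'a \<Rightarrow> complex. (\<exists>i\<in>verts K. x i \<noteq> 0) \<and>
     (\<forall>i\<in>verts K.
        (\<Sum>is\<in>{is. length is = r - 1 \<and> set is \<subseteq> verts K}.
            adj_tensor r K (i # is) * prod_list (map x is)) = lam * x i ^ (r - 1)))"

definition spectral_radius :: "nat \<Rightarrow> 'a hgraph \<Rightarrow> real" where
  "spectral_radius r K = Sup {cmod lam | lam. is_eigenvalue r K lam}"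

end

(* The spectral radius of an r-uniform hypergraph (r >= 2) is r times the maximum of the edge
   form F(y) = sum_e prod_{i in e} y_i over nonnegative y with sum_i y_i^r = 1: at a maximiser the
   Lagrange condition is the eigenvalue equation, and |lambda| sum_i |x_i|^r <= r F(|x|) for every
   eigenpair (lambda, x).

   Take a maximiser y on G_u.mH_v and split F and sum y^r into the shares of the m branches, the
   contribution of G being divided equally. Some branch has at least the average ratio; making
   that branch the centre (scaled by m^(1/r)) and copying the centre of y into all m branches
   (scaled by m^(-1/r)) gives a vector on H_v.mG_u with the same ratio. By symmetry the two
   maxima agree, and adding m - 1 copies of G, whose maximum is smaller, changes neither.

   A matching of (G_u.mH_v) + (m-1)G contains at most one new edge e_i. Relabelling the i-th copy
   of H as the centre, G as the i-th branch and exchanging the remaining copies maps it to a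
   matching of (H_v.mG_u) + (m-1)H of the same size, injectively; since both unions also have
   the same number of vertices, their matching polynomials coincide. *)

theory Submission
  imports Defs "HOL-Combinatorics.Multiset_Permutations" "HOL-Analysis.Analysis"
begin

lemma uniform_hg_finite_edges: "uniform_hg r K \<Longrightarrow> finite (edges K)"
  unfolding uniform_hg_def by (meson Pow_iff finite_Pow_iff finite_subset subsetI)

lemma uniform_hg_edge_nonempty: "uniform_hg r K \<Longrightarrow> 1 \<le> r \<Longrightarrow> e \<in> edges K \<Longrightarrow> e \<noteq> {}"
  unfolding uniform_hg_def by auto

lemma uniform_hg_finite_edge: "uniform_hg r K \<Longrightarrow> 1 \<le> r \<Longrightarrow> e \<in> edges K \<Longrightarrow> finite e"
  unfolding uniform_hg_def by (metis card.infinite not_one_le_zero)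

section \<open>The adjacency tensor as a sum over edges\<close>

text \<open>\<open>adj_apply K x i\<close> is the \<open>i\<close>-th entry of \<open>\<A>x\<^sup>r\<^sup>-\<^sup>1\<close>.\<close>
definition adj_apply :: "'c hgraph \<Rightarrow> ('c \<Rightarrow> 'f::comm_semiring_1) \<Rightarrow> 'c \<Rightarrow> 'f" where
  "adj_apply K x i = (\<Sum>e\<in>{e\<in>edges K. i \<in> e}. \<Prod>j\<in>e - {i}. x j)"

lemma lists_completing_edge:
  assumes U: "uniform_hg r K" and r: "1 \<le> r" and e: "e \<in> edges K" and i: "i \<in> e"
  shows "{is. (length is = r - 1 \<and> set is \<subseteq> verts K) \<and> insert i (set is) = e}
         = permutations_of_set (e - {i})"
proof -
  have ce: "card e = r" and eV: "e \<subseteq> verts K" using U e unfolding uniform_hg_def by auto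
  have fe: "finite e" using uniform_hg_finite_edge[OF U r e] .
  show ?thesis
  proof (intro equalityI subsetI)
    fix xs assume "xs \<in> {is. (length is = r - 1 \<and> set is \<subseteq> verts K) \<and> insert i (set is) = e}"
    hence l: "length xs = r - 1" and ins: "insert i (set xs) = e" by auto
    have "card (set xs) \<le> r - 1" using l card_length by metis
    moreover have "r = (if i \<in> set xs then card (set xs) else Suc (card (set xs)))"
      using ins ce by (metis List.finite_set card_insert_if)
    ultimately have "i \<notin> set xs" and "card (set xs) = length xs" using l r by (auto split: if_splits)
    hence "distinct xs" "set xs = e - {i}" using ins card_distinct by auto
    thus "xs \<in> permutations_of_set (e - {i})" by auto
  next
    fix xs assume "xs \<in> permutations_of_set (e - {i})"
    hence s: "set xs = e - {i}" and d: "distinct xs" by (auto dest: permutations_of_setD)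
    have "length xs = card (e - {i})" using s d distinct_card by metis
    also have "\<dots> = r - 1" using ce i fe by simp
    finally show "xs \<in> {is. (length is = r - 1 \<and> set is \<subseteq> verts K) \<and> insert i (set is) = e}"
      using s eV i by auto
  qed
qed

lemma adj_tensor_sum_eq_adj_apply:
  fixes x :: "'c \<Rightarrow> complex"
  assumes U: "uniform_hg r K" and r: "1 \<le> r"
  shows "(\<Sum>is\<in>{is. length is = r - 1 \<and> set is \<subseteq> verts K}. adj_tensor r K (i # is) * prod_list (map x is))
       = adj_apply K x i"
proof -
  let ?S = "{is. length is = r - 1 \<and> set is \<subseteq> verts K}"
  let ?E = "{e\<in>edges K. i \<in> e}"
  let ?f = "\<lambda>is. prod_list (map x is) / of_nat (fact (r - 1))"
  have fS: "finite ?S" using U unfolding uniform_hg_def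
    using finite_lists_length_eq[of "verts K" "r - 1"] by (simp add: conj_commute)
  have fE: "finite ?E" using uniform_hg_finite_edges[OF U] by simp
  have "adj_tensor r K (i # is) * prod_list (map x is) = (\<Sum>e\<in>?E. if insert i (set is) = e then ?f is else 0)"
    for "is" using fE by (simp add: adj_tensor_def sum.delta')
  hence "(\<Sum>is\<in>?S. adj_tensor r K (i # is) * prod_list (map x is))
       = (\<Sum>e\<in>?E. \<Sum>is\<in>?S. if insert i (set is) = e then ?f is else 0)"
    by (simp only: sum.swap[of _ ?S])
  also have "\<dots> = (\<Sum>e\<in>?E. \<Prod>j\<in>e - {i}. x j)"
  proof (rule sum.cong[OF refl])
    fix e assume e: "e \<in> ?E"
    have ce: "card e = r" using U e unfolding uniform_hg_def by auto
    have "(\<Sum>is\<in>?S. if insert i (set is) = e then ?f is else 0) = (\<Sum>is\<in>{is \<in> ?S. insert i (set is) = e}. ?f is)"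
      using fS by (rule sum.inter_filter[symmetric])
    also have "{is \<in> ?S. insert i (set is) = e} = permutations_of_set (e - {i})"
      using lists_completing_edge[OF U r] e by auto
    also have "(\<Sum>is\<in>permutations_of_set (e - {i}). ?f is)
        = (\<Sum>is\<in>permutations_of_set (e - {i}). (\<Prod>j\<in>e - {i}. x j) / of_nat (fact (r - 1)))"
      by (intro sum.cong refl) (metis permutations_of_setD prod.distinct_set_conv_list)
    also have "\<dots> = (\<Prod>j\<in>e - {i}. x j)"
      using uniform_hg_finite_edge[OF U r] ce e by simp
    finally show "(\<Sum>is\<in>?S. if insert i (set is) = e then ?f is else 0) = (\<Prod>j\<in>e - {i}. x j)" .
  qed
  finally show ?thesis unfolding adj_apply_def .
qed

lemma is_eigenvalue_iff_adj_apply: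
  assumes "uniform_hg r K" and "1 \<le> r"
  shows "is_eigenvalue r K lam \<longleftrightarrow>
    (\<exists>x. (\<exists>i\<in>verts K. x i \<noteq> 0) \<and> (\<forall>i\<in>verts K. adj_apply K x i = lam * x i ^ (r - 1)))"
  unfolding is_eigenvalue_def adj_tensor_sum_eq_adj_apply[OF assms] ..

lemma norm_adj_apply_le:
  fixes x :: "'c \<Rightarrow> 'f::{comm_semiring_1,real_normed_algebra_1}"
  shows "norm (adj_apply K x i) \<le> adj_apply K (\<lambda>j. norm (x j)) i"
proof -
  have "norm (adj_apply K x i) \<le> (\<Sum>e\<in>{e\<in>edges K. i \<in> e}. norm (\<Prod>j\<in>e - {i}. x j))"
    unfolding adj_apply_def by (rule norm_sum)
  also have "\<dots> \<le> adj_apply K (\<lambda>j. norm (x j)) i"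
    unfolding adj_apply_def by (intro sum_mono norm_prod_le)
  finally show ?thesis .
qed

lemma of_real_adj_apply: "of_real (adj_apply K y i) = adj_apply K (\<lambda>j. of_real (y j)) i"
  unfolding adj_apply_def by simp

section \<open>The spectral radius as the maximum of the edge form\<close>

definition edge_form :: "'c hgraph \<Rightarrow> ('c \<Rightarrow> real) \<Rightarrow> real" where
  "edge_form K y = (\<Sum>e\<in>edges K. \<Prod>i\<in>e. y i)"

definition power_sum :: "nat \<Rightarrow> 'c hgraph \<Rightarrow> ('c \<Rightarrow> real) \<Rightarrow> real" where
  "power_sum r K y = (\<Sum>i\<in>verts K. y i ^ r)"

definition nonneg_unit_vectors :: "nat \<Rightarrow> 'c hgraph \<Rightarrow> ('c \<Rightarrow> real) set" where
  "nonneg_unit_vectors r K = {y. (\<forall>i\<in>verts K. 0 \<le> y i) \<and> power_sum r K y = 1}"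

definition form_max :: "nat \<Rightarrow> 'c hgraph \<Rightarrow> real" where
  "form_max r K = Sup (edge_form K ` nonneg_unit_vectors r K)"

lemma edge_form_cong:
  "uniform_hg r K \<Longrightarrow> (\<And>i. i \<in> verts K \<Longrightarrow> y i = y' i) \<Longrightarrow> edge_form K y = edge_form K y'"
  unfolding edge_form_def uniform_hg_def by (intro sum.cong refl prod.cong) auto

lemma power_sum_cong: "(\<And>i. i \<in> verts K \<Longrightarrow> y i = y' i) \<Longrightarrow> power_sum r K y = power_sum r K y'"
  unfolding power_sum_def by (rule sum.cong) auto

lemma edge_form_nonneg: "uniform_hg r K \<Longrightarrow> (\<And>i. i \<in> verts K \<Longrightarrow> 0 \<le> y i) \<Longrightarrow> 0 \<le> edge_form K y"
  unfolding edge_form_def uniform_hg_def by (intro sum_nonneg prod_nonneg) blast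

lemma power_sum_nonneg: "(\<And>i. i \<in> verts K \<Longrightarrow> 0 \<le> y i) \<Longrightarrow> 0 \<le> power_sum r K y"
  unfolding power_sum_def by (intro sum_nonneg) auto

lemma edge_form_zero: "uniform_hg r K \<Longrightarrow> 1 \<le> r \<Longrightarrow> edge_form K (\<lambda>_. 0) = 0"
  unfolding edge_form_def
  by (intro sum.neutral ballI) (metis prod_zero_iff ex_in_conv uniform_hg_edge_nonempty uniform_hg_finite_edge)

lemma edge_form_scale: "uniform_hg r K \<Longrightarrow> edge_form K (\<lambda>i. s * y i) = s ^ r * edge_form K y"
  unfolding edge_form_def uniform_hg_def by (simp add: prod.distrib sum_distrib_left)

lemma power_sum_scale: "power_sum r K (\<lambda>i. s * y i) = s ^ r * power_sum r K y"
  unfolding power_sum_def by (simp add: power_mult_distrib sum_distrib_left)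

lemma sum_mult_adj_apply:
  assumes U: "uniform_hg r K" and r: "1 \<le> r"
  shows "(\<Sum>i\<in>verts K. y i * adj_apply K y i) = r * edge_form K y"
proof -
  have fV: "finite (verts K)" using U by (simp add: uniform_hg_def)
  have "y i * adj_apply K y i = (\<Sum>e\<in>{e\<in>edges K. i \<in> e}. \<Prod>j\<in>e. y j)" for i
    unfolding adj_apply_def sum_distrib_left
    by (intro sum.cong refl) (metis (mono_tags, lifting) mem_Collect_eq prod.remove uniform_hg_finite_edge[OF U r])
  hence "(\<Sum>i\<in>verts K. y i * adj_apply K y i) = (\<Sum>i\<in>verts K. \<Sum>e\<in>{e\<in>edges K. i \<in> e}. \<Prod>j\<in>e. y j)"
    by simp
  also have "\<dots> = (\<Sum>e\<in>edges K. \<Sum>i\<in>{i\<in>verts K. i \<in> e}. \<Prod>j\<in>e. y j)"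
    by (rule sum.swap_restrict[OF fV uniform_hg_finite_edges[OF U]])
  also have "\<dots> = (\<Sum>e\<in>edges K. r * (\<Prod>j\<in>e. y j))"
  proof (rule sum.cong[OF refl])
    fix e assume e: "e \<in> edges K"
    hence "{i\<in>verts K. i \<in> e} = e" and "card e = r" using U by (auto simp: uniform_hg_def)
    thus "(\<Sum>i\<in>{i\<in>verts K. i \<in> e}. \<Prod>j\<in>e. y j) = r * (\<Prod>j\<in>e. y j)" by simp
  qed
  finally show ?thesis by (simp add: edge_form_def sum_distrib_left)
qed

lemma edge_form_update:
  assumes U: "uniform_hg r K" and r: "1 \<le> r"
  shows "edge_form K (z(i := z i + t)) = edge_form K z + t * adj_apply K z i"
proof -
  have "(\<Prod>j\<in>e. (z(i := z i + t)) j) = (\<Prod>j\<in>e. z j) + (if i \<in> e then t * (\<Prod>j\<in>e - {i}. z j) else 0)"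
    if e: "e \<in> edges K" for e
  proof (cases "i \<in> e")
    case True
    have fe: "finite e" using uniform_hg_finite_edge[OF U r e] .
    have "(\<Prod>j\<in>e - {i}. (z(i := z i + t)) j) = (\<Prod>j\<in>e - {i}. z j)" by (intro prod.cong) auto
    thus ?thesis using prod.remove[OF fe True, of z] prod.remove[OF fe True, of "z(i := z i + t)"] True
      by (simp add: algebra_simps)
  next
    case False
    have "(\<Prod>j\<in>e. (z(i := z i + t)) j) = (\<Prod>j\<in>e. z j)" using False by (intro prod.cong) auto
    thus ?thesis using False by simp
  qed
  hence "edge_form K (z(i := z i + t))
      = edge_form K z + (\<Sum>e\<in>edges K. if i \<in> e then t * (\<Prod>j\<in>e - {i}. z j) else 0)"
    unfolding edge_form_def by (simp add: sum.distrib)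
  also have "(\<Sum>e\<in>edges K. if i \<in> e then t * (\<Prod>j\<in>e - {i}. z j) else 0) = t * adj_apply K z i"
    unfolding adj_apply_def sum_distrib_left
    using uniform_hg_finite_edges[OF U] by (rule sum.inter_filter[symmetric])
  finally show ?thesis .
qed

lemma power_sum_update:
  assumes "finite (verts K)" and "i \<in> verts K"
  shows "power_sum r K (z(i := z i + t)) = power_sum r K z + ((z i + t) ^ r - z i ^ r)"
proof -
  have "(\<Sum>j\<in>verts K - {i}. (z(i := z i + t)) j ^ r) = (\<Sum>j\<in>verts K - {i}. z j ^ r)"
    by (intro sum.cong) auto
  thus ?thesis unfolding power_sum_def using assms by (simp add: sum.remove)
qed

text \<open>For \<open>a > 0\<close> the hypothesis says that \<open>t = 0\<close> is an interior minimum of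
  \<open>M((a + t)\<^sup>r - a\<^sup>r) - tc\<close>, so its derivative vanishes there; for \<open>a = 0\<close> the
  right-hand side is \<open>M t\<^sup>r = o(t)\<close> because \<open>r \<ge> 2\<close>, which forces \<open>c = 0\<close>.\<close>
lemma eq_of_power_increment_bound:
  fixes a c M :: real
  assumes a: "0 \<le> a" and M: "0 \<le> M" and r: "2 \<le> r" and c: "0 \<le> c"
    and bound: "\<And>t. -a \<le> t \<Longrightarrow> t * c \<le> M * ((a + t) ^ r - a ^ r)"
  shows "c = M * r * a ^ (r - 1)"
proof (cases "a = 0")
  case True
  have "c \<le> 0"
  proof (rule ccontr)
    assume "\<not> c \<le> 0"
    define t where "t = min 1 (c / (2 * (M + 1)))"
    have t: "0 < t" "t \<le> 1" "t \<le> c / (2 * (M + 1))" using \<open>\<not> c \<le> 0\<close> M by (auto simp: t_def)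
    have "t * c \<le> M * (t * t ^ (r - 1))"
      using bound[of t] True t r by (simp add: power_eq_if)
    hence "c \<le> M * t ^ (r - 1)" using t by (simp add: mult.left_commute)
    also have "\<dots> \<le> M * t"
      using power_decreasing[of 1 "r - 1" t] t r M by (simp add: mult_left_mono)
    also have "\<dots> \<le> M * (c / (2 * (M + 1)))" using t(3) M by (rule mult_left_mono)
    also have "\<dots> < c" using M \<open>\<not> c \<le> 0\<close> by (simp add: field_simps add_nonneg_pos)
    finally show False by simp
  qed
  thus ?thesis using c True r by simp
next
  case False
  define f where "f t = M * ((a + t) ^ r - a ^ r) - t * c" for t
  have "(f has_real_derivative (M * (of_nat r * (a + 0) ^ (r - 1)) - c)) (at 0)"
    unfolding f_def by (auto intro!: derivative_eq_intros)
  moreover have "0 < a" using a False by simp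
  moreover have "\<forall>y. \<bar>0 - y\<bar> < a \<longrightarrow> f 0 \<le> f y" using bound by (auto simp: f_def)
  ultimately have "M * (of_nat r * (a + 0) ^ (r - 1)) - c = 0" by (rule DERIV_local_min)
  thus ?thesis by (simp add: algebra_simps)
qed

lemma compact_PiE_atLeastAtMost: "compact (PiE I (\<lambda>_. {a..b::real}))"
proof -
  have "PiE UNIV (\<lambda>i. if i \<in> I then {a..b} else {undefined}) = PiE I (\<lambda>_. {a..b})"
    by (auto simp: PiE_def Pi_def extensional_def split: if_splits)
  moreover have "compactin (product_topology (\<lambda>_. euclidean) UNIV)
      (PiE UNIV (\<lambda>i. if i \<in> I then {a..b} else {undefined}))"
    by (subst compactin_PiE) auto
  ultimately show ?thesis by (simp add: euclidean_product_topology)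
qed

locale nonempty_uniform_hg =
  fixes r :: nat and K :: "'c hgraph"
  assumes uniform: "uniform_hg r K" and r_ge_2: "2 \<le> r" and verts_nonempty: "verts K \<noteq> {}"
begin

lemma r_ge_1: "1 \<le> r"
  using r_ge_2 by simp

lemma finite_verts: "finite (verts K)"
  using uniform by (simp add: uniform_hg_def)

lemma nonneg_unit_vector_le_1:
  assumes y: "y \<in> nonneg_unit_vectors r K" and i: "i \<in> verts K"
  shows "y i \<le> 1"
proof -
  have nonneg: "\<forall>j\<in>verts K. 0 \<le> y j" and "power_sum r K y = 1"
    using y by (auto simp: nonneg_unit_vectors_def)
  moreover have "y i ^ r \<le> power_sum r K y"
    unfolding power_sum_def by (rule member_le_sum) (use nonneg i finite_verts in auto)
  ultimately show ?thesis using r_ge_2 i by (metis not_numeral_le_zero power_le_one_iff)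
qed

lemma nonneg_unit_vectors_nonempty: "nonneg_unit_vectors r K \<noteq> {}"
proof -
  obtain w where w: "w \<in> verts K" using verts_nonempty by auto
  have "power_sum r K (\<lambda>i. if i = w then 1 else 0) = (\<Sum>i\<in>verts K. if i = w then 1 else 0)"
    unfolding power_sum_def using r_ge_1 by (intro sum.cong) auto
  hence "(\<lambda>i. if i = w then 1 else 0) \<in> nonneg_unit_vectors r K"
    using w finite_verts by (simp add: nonneg_unit_vectors_def)
  thus ?thesis by blast
qed

text \<open>Compactness: up to values outside \<open>verts K\<close>, the vectors range over a closed subset of a cube.\<close>
lemma exists_form_maximiser:
  "\<exists>z\<in>nonneg_unit_vectors r K. \<forall>y\<in>nonneg_unit_vectors r K. edge_form K y \<le> edge_form K z"
proof -
  define S where "S = PiE (verts K) (\<lambda>_. {0..1::real}) \<inter> {y. power_sum r K y = 1}"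
  have "continuous_on UNIV (power_sum r K)" "continuous_on UNIV (edge_form K)" "continuous_on UNIV (power_sum r K)" "continuous_on UNIV (edge_form K)"
    unfolding power_sum_def edge_form_def
    by (intro continuous_intros continuous_on_product_coordinates)+
  hence "compact S"
    unfolding S_def by (intro compact_Int_closed compact_PiE_atLeastAtMost closed_Collect_eq) auto
  have restrict_S: "restrict y (verts K) \<in> S" if "y \<in> nonneg_unit_vectors r K" for y
  proof -
    have "power_sum r K (restrict y (verts K)) = power_sum r K y" by (rule power_sum_cong) simp
    thus ?thesis using that nonneg_unit_vector_le_1[OF that]
      unfolding S_def by (auto simp: nonneg_unit_vectors_def)
  qed
  have "S \<noteq> {}" using restrict_S nonneg_unit_vectors_nonempty by blast
  with \<open>compact S\<close> \<open>continuous_on UNIV (edge_form K)\<close>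
  obtain z where z: "z \<in> S" "\<forall>y\<in>S. edge_form K y \<le> edge_form K z"
    using continuous_attains_sup[of S "edge_form K"] continuous_on_subset by blast
  have "z \<in> nonneg_unit_vectors r K"
    using z(1) unfolding S_def nonneg_unit_vectors_def by auto
  moreover have "edge_form K y \<le> edge_form K z" if "y \<in> nonneg_unit_vectors r K" for y
    using z(2) restrict_S[OF that] edge_form_cong[OF uniform, of y "restrict y (verts K)"] by simp
  ultimately show ?thesis by blast
qed

lemma form_max_attained:
  obtains z where "z \<in> nonneg_unit_vectors r K" and "edge_form K z = form_max r K"
proof -
  obtain z where "z \<in> nonneg_unit_vectors r K" "\<forall>y\<in>nonneg_unit_vectors r K. edge_form K y \<le> edge_form K z"
    using exists_form_maximiser by blast
  moreover from this have "form_max r K = edge_form K z"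
    unfolding form_max_def by (intro cSup_eq_maximum) auto
  ultimately show thesis using that by simp
qed

lemma edge_form_le_form_max:
  assumes "y \<in> nonneg_unit_vectors r K"
  shows "edge_form K y \<le> form_max r K"
proof -
  obtain z where "\<forall>y\<in>nonneg_unit_vectors r K. edge_form K y \<le> edge_form K z"
    using exists_form_maximiser by blast
  hence "bdd_above (edge_form K ` nonneg_unit_vectors r K)" by (auto intro: bdd_aboveI2)
  thus ?thesis unfolding form_max_def using assms by (intro cSup_upper) auto
qed

lemma form_max_nonneg: "0 \<le> form_max r K"
proof -
  obtain z where "z \<in> nonneg_unit_vectors r K" "edge_form K z = form_max r K"
    by (rule form_max_attained)
  thus ?thesis using edge_form_nonneg[OF uniform, of z] by (auto simp: nonneg_unit_vectors_def)
qed

lemma edge_form_le_form_max_power_sum: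
  assumes nonneg: "\<And>i. i \<in> verts K \<Longrightarrow> 0 \<le> y i"
  shows "edge_form K y \<le> form_max r K * power_sum r K y"
proof (cases "power_sum r K y = 0")
  case True
  hence "\<forall>i\<in>verts K. y i = 0"
    using finite_verts nonneg unfolding power_sum_def by (subst (asm) sum_nonneg_eq_0_iff) auto
  hence "edge_form K y = edge_form K (\<lambda>_. 0)" by (intro edge_form_cong[OF uniform]) auto
  thus ?thesis using True edge_form_zero[OF uniform r_ge_1] by simp
next
  case False
  hence pos: "0 < power_sum r K y" using power_sum_nonneg[of K y r] nonneg by simp
  define s where "s = 1 / root r (power_sum r K y)"
  have s: "0 \<le> s" "s ^ r = 1 / power_sum r K y"
    using pos r_ge_2 by (auto simp: s_def power_divide real_root_pow_pos2)
  hence "(\<lambda>i. s * y i) \<in> nonneg_unit_vectors r K"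
    using pos nonneg by (simp add: nonneg_unit_vectors_def power_sum_scale)
  hence "edge_form K (\<lambda>i. s * y i) \<le> form_max r K" by (rule edge_form_le_form_max)
  thus ?thesis using pos s by (simp add: edge_form_scale[OF uniform] divide_le_eq mult_ac)
qed

lemma norm_eigenvalue_le:
  assumes "is_eigenvalue r K lam"
  shows "cmod lam \<le> r * form_max r K"
proof -
  obtain x where x0: "\<exists>i\<in>verts K. x i \<noteq> 0"
    and eig: "\<And>i. i \<in> verts K \<Longrightarrow> adj_apply K x i = lam * x i ^ (r - 1)"
    using assms is_eigenvalue_iff_adj_apply[OF uniform r_ge_1] by blast
  define a where "a j = cmod (x j)" for j
  have a0: "0 \<le> a j" for j by (simp add: a_def)
  have "cmod lam * a i ^ r \<le> a i * adj_apply K a i" if i: "i \<in> verts K" for i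
  proof -
    have "cmod (adj_apply K x i) = cmod lam * a i ^ (r - 1)"
      using eig[OF i] by (simp add: a_def norm_mult norm_power)
    moreover have "a i ^ r = a i * a i ^ (r - 1)"
      using r_ge_1 by (metis Suc_diff_le diff_Suc_1 power_Suc)
    ultimately have "cmod lam * a i ^ r = a i * cmod (adj_apply K x i)" by simp
    also have "\<dots> \<le> a i * adj_apply K a i"
      unfolding a_def by (intro mult_left_mono norm_adj_apply_le) simp
    finally show ?thesis .
  qed
  hence "cmod lam * power_sum r K a \<le> r * edge_form K a"
    unfolding power_sum_def sum_distrib_left sum_mult_adj_apply[OF uniform r_ge_1, symmetric]
    by (rule sum_mono)
  also have "\<dots> \<le> r * (form_max r K * power_sum r K a)"
    using edge_form_le_form_max_power_sum a0 by (simp add: mult_left_mono)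
  finally have *: "cmod lam * power_sum r K a \<le> r * form_max r K * power_sum r K a"
    by (simp add: mult.assoc)
  obtain i where i: "i \<in> verts K" "x i \<noteq> 0" using x0 by blast
  have "0 < a i ^ r" using i by (simp add: a_def)
  also have "a i ^ r \<le> power_sum r K a"
    unfolding power_sum_def by (rule member_le_sum) (use i a0 finite_verts in auto)
  finally show ?thesis using * by simp
qed

text \<open>The Lagrange condition at a maximiser, obtained by varying one coordinate.\<close>
lemma adj_apply_form_maximiser:
  assumes z: "z \<in> nonneg_unit_vectors r K" "edge_form K z = form_max r K" and i: "i \<in> verts K"
  shows "adj_apply K z i = form_max r K * r * z i ^ (r - 1)"
proof (rule eq_of_power_increment_bound)
  have nonneg: "\<forall>j\<in>verts K. 0 \<le> z j" using z by (simp add: nonneg_unit_vectors_def)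
  show "0 \<le> z i" using nonneg i by simp
  show "0 \<le> form_max r K" by (rule form_max_nonneg)
  show "2 \<le> r" by (rule r_ge_2)
  show "0 \<le> adj_apply K z i"
    unfolding adj_apply_def using nonneg uniform
    by (intro sum_nonneg prod_nonneg) (auto simp: uniform_hg_def)
  fix t assume "- z i \<le> t"
  hence "\<And>j. j \<in> verts K \<Longrightarrow> 0 \<le> (z(i := z i + t)) j" using nonneg by auto
  hence "edge_form K (z(i := z i + t)) \<le> form_max r K * power_sum r K (z(i := z i + t))"
    by (rule edge_form_le_form_max_power_sum)
  thus "t * adj_apply K z i \<le> form_max r K * ((z i + t) ^ r - z i ^ r)"
    using z unfolding edge_form_update[OF uniform r_ge_1] power_sum_update[OF finite_verts i]
    by (simp add: nonneg_unit_vectors_def algebra_simps)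
qed

lemma is_eigenvalue_form_max: "is_eigenvalue r K (of_real (r * form_max r K))"
proof -
  obtain z where z: "z \<in> nonneg_unit_vectors r K" "edge_form K z = form_max r K"
    by (rule form_max_attained)
  have "\<exists>i\<in>verts K. z i \<noteq> 0"
  proof (rule ccontr)
    assume "\<not> ?thesis"
    hence "power_sum r K z = 0" unfolding power_sum_def using r_ge_1 by simp
    thus False using z by (simp add: nonneg_unit_vectors_def)
  qed
  moreover have "adj_apply K (\<lambda>j. of_real (z j)) i = of_real (r * form_max r K) * of_real (z i) ^ (r - 1)"
    if "i \<in> verts K" for i
    unfolding of_real_adj_apply[symmetric] adj_apply_form_maximiser[OF z that] by (simp add: mult_ac)
  ultimately show ?thesis
    unfolding is_eigenvalue_iff_adj_apply[OF uniform r_ge_1] by (intro exI[of _ "\<lambda>j. of_real (z j)"]) auto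
qed

theorem spectral_radius_eq_form_max: "spectral_radius r K = r * form_max r K"
  unfolding spectral_radius_def
proof (rule cSup_eq_maximum)
  have "cmod (of_real (r * form_max r K)) = r * form_max r K"
    using form_max_nonneg by (simp add: norm_mult)
  thus "r * form_max r K \<in> {cmod lam |lam. is_eigenvalue r K lam}"
    using is_eigenvalue_form_max by (metis (mono_tags, lifting) mem_Collect_eq)
next
  fix x assume "x \<in> {cmod lam |lam. is_eigenvalue r K lam}"
  thus "x \<le> r * form_max r K" using norm_eigenvalue_le by blast
qed

end

section \<open>Disjoint unions, copies and the coalescence\<close>

lemma sum_prod_image_sets:
  assumes "inj_on f (\<Union>E)"
  shows "(\<Sum>e\<in>(\<lambda>e. f ` e) ` E. \<Prod>x\<in>e. y x) = (\<Sum>e\<in>E. \<Prod>x\<in>e. y (f x))"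
proof -
  have "inj_on (\<lambda>e. f ` e) E"
    using assms by (intro inj_onI) (metis Sup_upper inj_on_image_eq_iff)
  moreover have "inj_on f e" if "e \<in> E" for e
    using assms that by (meson Sup_upper inj_on_subset)
  ultimately show ?thesis by (simp add: sum.reindex prod.reindex)
qed

lemma verts_dunion: "verts (dunion A B) = Inl ` verts A \<union> Inr ` verts B"
  by (simp add: dunion_def verts_def)

lemma edges_dunion: "edges (dunion A B) = (\<lambda>e. Inl ` e) ` edges A \<union> (\<lambda>e. Inr ` e) ` edges B"
  by (simp add: dunion_def edges_def)

lemma uniform_dunion:
  assumes A: "uniform_hg r A" and B: "uniform_hg r B"
  shows "uniform_hg r (dunion A B)"
  unfolding uniform_hg_def
proof (rule conjI[OF _ ballI])
  show "finite (verts (dunion A B))" using A B by (simp add: uniform_hg_def verts_dunion)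
  fix e assume "e \<in> edges (dunion A B)"
  then consider f where "f \<in> edges A" "e = Inl ` f" | f where "f \<in> edges B" "e = Inr ` f"
    unfolding edges_dunion by blast
  thus "e \<subseteq> verts (dunion A B) \<and> card e = r"
  proof cases
    case (1 f)
    hence "f \<subseteq> verts A" "card f = r" using A by (auto simp: uniform_hg_def)
    thus ?thesis using 1 by (auto simp: verts_dunion card_image)
  next
    case (2 f)
    hence "f \<subseteq> verts B" "card f = r" using B by (auto simp: uniform_hg_def)
    thus ?thesis using 2 by (auto simp: verts_dunion card_image)
  qed
qed

lemma card_verts_dunion:
  "finite (verts A) \<Longrightarrow> finite (verts B) \<Longrightarrow> card (verts (dunion A B)) = card (verts A) + card (verts B)"
  unfolding verts_dunion by (subst card_Un_disjoint) (auto simp: card_image)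

lemma edge_dunion_not_mixed: "e \<in> edges (dunion A B) \<Longrightarrow> Inl a \<in> e \<Longrightarrow> Inr b \<notin> e"
  unfolding edges_dunion by auto

lemma edge_form_dunion:
  assumes "uniform_hg r A" and "uniform_hg r B" and "1 \<le> r"
  shows "edge_form (dunion A B) y = edge_form A (\<lambda>a. y (Inl a)) + edge_form B (\<lambda>b. y (Inr b))"
proof -
  have "(\<lambda>e. Inl ` e) ` edges A \<inter> (\<lambda>e. Inr ` e) ` edges B = {}"
    using uniform_hg_edge_nonempty[OF assms(1,3)] by fastforce
  thus ?thesis unfolding edge_form_def edges_dunion
    using uniform_hg_finite_edges[OF assms(1)] uniform_hg_finite_edges[OF assms(2)]
    by (simp add: sum.union_disjoint sum_prod_image_sets)
qed

lemma power_sum_dunion: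
  assumes "finite (verts A)" and "finite (verts B)"
  shows "power_sum r (dunion A B) y = power_sum r A (\<lambda>a. y (Inl a)) + power_sum r B (\<lambda>b. y (Inr b))"
  unfolding power_sum_def verts_dunion using assms
  by (subst sum.union_disjoint) (auto simp: sum.reindex)

lemma verts_copies: "verts (copies k K) = {..<k} \<times> verts K"
  by (simp add: copies_def verts_def)

lemma edges_copies: "edges (copies k K) = (\<Union>i<k. (\<lambda>e. Pair i ` e) ` edges K)"
  by (auto simp: copies_def edges_def)

lemma uniform_copies: "uniform_hg r K \<Longrightarrow> uniform_hg r (copies k K)"
  unfolding uniform_hg_def verts_copies edges_copies by (auto simp: card_image inj_on_def)

lemma card_verts_copies: "card (verts (copies k K)) = k * card (verts K)"
  by (simp add: verts_copies card_cartesian_product)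

lemma edge_form_copies:
  assumes "uniform_hg r K" and "1 \<le> r"
  shows "edge_form (copies k K) y = (\<Sum>i<k. edge_form K (\<lambda>x. y (i, x)))"
proof -
  have "edge_form (copies k K) y = (\<Sum>i<k. \<Sum>e\<in>(\<lambda>e. Pair i ` e) ` edges K. \<Prod>x\<in>e. y x)"
    unfolding edge_form_def edges_copies
    using uniform_hg_finite_edges[OF assms(1)] uniform_hg_edge_nonempty[OF assms]
    by (intro sum.UNION_disjoint) fastforce+
  thus ?thesis unfolding edge_form_def by (simp add: sum_prod_image_sets inj_on_def)
qed

lemma power_sum_copies: "power_sum r (copies k K) y = (\<Sum>i<k. power_sum r K (\<lambda>x. y (i, x)))"
  unfolding power_sum_def verts_copies by (simp add: sum.cartesian_product)

definition bridge_edge :: "nat \<Rightarrow> 'a \<Rightarrow> 'b \<Rightarrow> nat \<Rightarrow> ('a + (nat \<times> 'b) + (nat \<times> nat)) set" where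
  "bridge_edge r u v i = {Inl u, Inr (Inl (i, v))} \<union> (\<lambda>j. Inr (Inr (i, j))) ` {2..r-1}"

lemma verts_coalesce: "verts (coalesce r G u m H v) = Inl ` verts G
    \<union> (\<lambda>(i, h). Inr (Inl (i, h))) ` ({..<m} \<times> verts H) \<union> (\<lambda>(i, j). Inr (Inr (i, j))) ` ({..<m} \<times> {2..r-1})"
  by (simp add: coalesce_def verts_def)

lemma edges_coalesce: "edges (coalesce r G u m H v) = (\<lambda>e. Inl ` e) ` edges G
    \<union> (\<Union>i<m. (\<lambda>e. (\<lambda>h. Inr (Inl (i, h))) ` e) ` edges H) \<union> bridge_edge r u v ` {..<m}"
  by (auto simp: coalesce_def edges_def bridge_edge_def)

lemma verts_coalesce_iff [simp]:
  "Inl g \<in> verts (coalesce r G u m H v) \<longleftrightarrow> g \<in> verts G"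
  "Inr (Inl (i, h)) \<in> verts (coalesce r G u m H v) \<longleftrightarrow> i < m \<and> h \<in> verts H"
  "Inr (Inr (i, j)) \<in> verts (coalesce r G u m H v) \<longleftrightarrow> i < m \<and> j \<in> {2..r-1}"
  by (auto simp: verts_coalesce)

lemma bridge_edge_eq_insert:
  "bridge_edge r u v i = insert (Inl u) (insert (Inr (Inl (i, v))) ((\<lambda>j. Inr (Inr (i, j))) ` {2..r-1}))"
  by (simp add: bridge_edge_def)

lemma card_bridge_edge:
  fixes u :: 'a and v :: 'b
  assumes "2 \<le> r"
  shows "card (bridge_edge r u v i) = r"
proof -
  have "card ((\<lambda>j. Inr (Inr (i, j)) :: 'a + (nat \<times> 'b) + (nat \<times> nat)) ` {2..r-1}) = r - 2"
    by (simp add: card_image inj_on_def)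
  thus ?thesis using assms unfolding bridge_edge_eq_insert by (simp add: image_iff)
qed

lemma inj_bridge_edge: "inj (bridge_edge r u v)"
proof (rule injI)
  fix i j assume "bridge_edge r u v i = bridge_edge r u v j"
  moreover have "Inr (Inl (i, v)) \<in> bridge_edge r u v i" by (simp add: bridge_edge_def)
  ultimately show "i = j" by (auto simp: bridge_edge_def)
qed

lemma prod_bridge_edge: "(\<Prod>x\<in>bridge_edge r u v i. y x)
    = y (Inl u) * y (Inr (Inl (i, v))) * (\<Prod>j\<in>{2..r-1}. y (Inr (Inr (i, j))))"
  unfolding bridge_edge_eq_insert by (simp add: prod.reindex inj_on_def mult.assoc image_iff)

lemma coalesce_edge_cases:
  assumes "e \<in> edges (coalesce r G u m H v)"
  obtains (G) f where "f \<in> edges G" and "e = Inl ` f"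
    | (H) i f where "i < m" and "f \<in> edges H" and "e = (\<lambda>h. Inr (Inl (i, h))) ` f"
    | (bridge) i where "i < m" and "e = bridge_edge r u v i"
  using assms unfolding edges_coalesce
proof (elim UnE)
  assume "e \<in> (\<lambda>e. Inl ` e) ` edges G"
  thus thesis using G by blast
next
  assume "e \<in> (\<Union>i<m. (\<lambda>e. (\<lambda>h. Inr (Inl (i, h))) ` e) ` edges H)"
  thus thesis using H by blast
next
  assume "e \<in> bridge_edge r u v ` {..<m}"
  thus thesis using bridge by blast
qed

lemma uniform_coalesce:
  assumes "uniform_hg r G" and "uniform_hg r H" and "2 \<le> r" and "u \<in> verts G" and "v \<in> verts H"
  shows "uniform_hg r (coalesce r G u m H v)"
  unfolding uniform_hg_def
proof (rule conjI[OF _ ballI])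
  show "finite (verts (coalesce r G u m H v))" using assms by (simp add: verts_coalesce uniform_hg_def)
  fix e assume "e \<in> edges (coalesce r G u m H v)"
  thus "e \<subseteq> verts (coalesce r G u m H v) \<and> card e = r"
  proof (cases rule: coalesce_edge_cases)
    case (G f)
    hence "f \<subseteq> verts G" "card f = r" using assms(1) by (auto simp: uniform_hg_def)
    thus ?thesis using G by (auto simp: card_image)
  next
    case (H i f)
    hence "f \<subseteq> verts H" "card f = r" using assms(2) by (auto simp: uniform_hg_def)
    thus ?thesis using H by (auto simp: card_image inj_on_def)
  next
    case (bridge i)
    have "bridge_edge r u v i \<subseteq> verts (coalesce r G u m H v)"
      using bridge(1) assms(4,5) by (auto simp: bridge_edge_def)
    thus ?thesis using bridge(2) card_bridge_edge[OF assms(3)] by simp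
  qed
qed

lemma card_verts_coalesce:
  assumes "finite (verts G)" and "finite (verts H)"
  shows "card (verts (coalesce r G u m H v)) = card (verts G) + m * card (verts H) + m * (r - 2)"
  unfolding verts_coalesce using assms
  by (subst card_Un_disjoint card_image, auto simp: card_image inj_on_def card_cartesian_product)+

lemma edge_form_coalesce:
  assumes G: "uniform_hg r G" and H: "uniform_hg r H" and r: "1 \<le> r"
  shows "edge_form (coalesce r G u m H v) y = edge_form G (\<lambda>g. y (Inl g))
     + (\<Sum>i<m. edge_form H (\<lambda>h. y (Inr (Inl (i, h))))
              + y (Inl u) * y (Inr (Inl (i, v))) * (\<Prod>j\<in>{2..r-1}. y (Inr (Inr (i, j)))))"
proof -
  let ?A = "(\<lambda>e. Inl ` e) ` edges G :: ('a + (nat \<times> 'b) + (nat \<times> nat)) set set"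
  let ?B = "\<lambda>i::nat. ((\<lambda>e. (\<lambda>h. Inr (Inl (i, h))) ` e) ` edges H :: ('a + (nat \<times> 'b) + (nat \<times> nat)) set set)"
  let ?C = "bridge_edge r u v ` {..<m}"
  have fin: "finite ?A" "finite (\<Union>i<m. ?B i)" "finite ?C"
    using uniform_hg_finite_edges[OF G] uniform_hg_finite_edges[OF H] by auto
  have "?A \<inter> (\<Union>i<m. ?B i) = {}" using uniform_hg_edge_nonempty[OF G r] by fastforce
  moreover have "(?A \<union> (\<Union>i<m. ?B i)) \<inter> ?C = {}" by (auto simp: bridge_edge_def)
  ultimately have "edge_form (coalesce r G u m H v) y
      = (\<Sum>e\<in>?A. \<Prod>x\<in>e. y x) + (\<Sum>e\<in>(\<Union>i<m. ?B i). \<Prod>x\<in>e. y x) + (\<Sum>e\<in>?C. \<Prod>x\<in>e. y x)"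
    unfolding edge_form_def edges_coalesce using fin by (simp add: sum.union_disjoint)
  also have "(\<Sum>e\<in>(\<Union>i<m. ?B i). \<Prod>x\<in>e. y x) = (\<Sum>i<m. \<Sum>e\<in>?B i. \<Prod>x\<in>e. y x)"
    using uniform_hg_finite_edges[OF H] uniform_hg_edge_nonempty[OF H r]
    by (intro sum.UNION_disjoint) fastforce+
  also have "(\<Sum>e\<in>?C. \<Prod>x\<in>e. y x) = (\<Sum>i<m. \<Prod>x\<in>bridge_edge r u v i. y x)"
    by (simp add: sum.reindex inj_on_subset[OF inj_bridge_edge])
  finally show ?thesis
    by (simp add: edge_form_def sum_prod_image_sets inj_on_def prod_bridge_edge sum.distrib add.assoc)
qed

lemma power_sum_coalesce:
  assumes "finite (verts G)" and "finite (verts H)"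
  shows "power_sum r (coalesce r G u m H v) y = power_sum r G (\<lambda>g. y (Inl g))
     + (\<Sum>i<m. power_sum r H (\<lambda>h. y (Inr (Inl (i, h)))) + (\<Sum>j\<in>{2..r-1}. y (Inr (Inr (i, j))) ^ r))"
proof -
  have "power_sum r (coalesce r G u m H v) y = power_sum r G (\<lambda>g. y (Inl g))
      + (\<Sum>p\<in>{..<m} \<times> verts H. y (Inr (Inl p)) ^ r) + (\<Sum>p\<in>{..<m} \<times> {2..r-1}. y (Inr (Inr p)) ^ r)"
    unfolding power_sum_def verts_coalesce using assms
    by (subst sum.union_disjoint sum.reindex, auto simp: inj_on_def case_prod_unfold)+
  thus ?thesis by (simp add: power_sum_def sum.cartesian_product sum.distrib add.assoc)
qed

section \<open>Comparing the maxima\<close>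

lemma (in nonempty_uniform_hg) form_max_le_embedding:
  assumes L: "uniform_hg r L" and inj: "inj_on f (verts K)" and sub: "f ` verts K \<subseteq> verts L"
    and edges: "\<And>e. e \<in> edges K \<Longrightarrow> f ` e \<in> edges L"
  shows "form_max r K \<le> form_max r L"
proof -
  interpret L: nonempty_uniform_hg r L
    using L r_ge_2 verts_nonempty sub by unfold_locales auto
  obtain z where z: "z \<in> nonneg_unit_vectors r K" "edge_form K z = form_max r K"
    by (rule form_max_attained)
  define y where "y x = (if x \<in> f ` verts K then z (the_inv_into (verts K) f x) else 0)" for x
  have y_f: "y (f i) = z i" if "i \<in> verts K" for i
    using that inj by (simp add: y_def the_inv_into_f_f)
  have nonneg: "0 \<le> y x" for x
    using z the_inv_into_into[OF inj] by (auto simp: y_def nonneg_unit_vectors_def)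
  have "power_sum r L y = (\<Sum>x\<in>f ` verts K. y x ^ r)"
    unfolding power_sum_def using sub r_ge_1 L.finite_verts
    by (intro sum.mono_neutral_right) (auto simp: y_def)
  also have "\<dots> = power_sum r K z"
    unfolding power_sum_def using inj by (simp add: sum.reindex y_f)
  finally have y_unit: "y \<in> nonneg_unit_vectors r L"
    using z nonneg by (simp add: nonneg_unit_vectors_def)
  have edges_sub: "\<Union>(edges K) \<subseteq> verts K" using uniform by (auto simp: uniform_hg_def)
  have "form_max r K = (\<Sum>e\<in>edges K. \<Prod>x\<in>e. y (f x))"
    unfolding z(2)[symmetric] edge_form_def using edges_sub
    by (intro sum.cong refl prod.cong) (auto simp: y_f)
  also have "\<dots> = (\<Sum>e\<in>(\<lambda>e. f ` e) ` edges K. \<Prod>x\<in>e. y x)"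
    using inj_on_subset[OF inj edges_sub] by (rule sum_prod_image_sets[symmetric])
  also have "\<dots> \<le> edge_form L y"
    unfolding edge_form_def using edges uniform_hg_finite_edges[OF L] nonneg
    by (intro sum_mono2 prod_nonneg) auto
  also have "\<dots> \<le> form_max r L" using y_unit by (rule L.edge_form_le_form_max)
  finally show ?thesis .
qed

lemma form_max_dunion_eq:
  assumes A: "nonempty_uniform_hg r A" and B: "uniform_hg r B"
    and bound: "\<And>y. (\<And>i. i \<in> verts B \<Longrightarrow> 0 \<le> y i) \<Longrightarrow> edge_form B y \<le> form_max r A * power_sum r B y"
  shows "form_max r (dunion A B) = form_max r A"
proof (rule antisym)
  interpret A: nonempty_uniform_hg r A by (rule A)
  interpret D: nonempty_uniform_hg r "dunion A B"
    using A.uniform B A.r_ge_2 A.verts_nonempty by unfold_locales (auto simp: uniform_dunion verts_dunion)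
  have finB: "finite (verts B)" using B by (simp add: uniform_hg_def)
  obtain z where z: "z \<in> nonneg_unit_vectors r (dunion A B)" "edge_form (dunion A B) z = form_max r (dunion A B)"
    by (rule D.form_max_attained)
  have nonneg: "\<And>a. a \<in> verts A \<Longrightarrow> 0 \<le> z (Inl a)" "\<And>b. b \<in> verts B \<Longrightarrow> 0 \<le> z (Inr b)"
    using z(1) by (auto simp: nonneg_unit_vectors_def verts_dunion)
  have "form_max r (dunion A B) = edge_form A (\<lambda>a. z (Inl a)) + edge_form B (\<lambda>b. z (Inr b))"
    using z(2) edge_form_dunion[OF A.uniform B A.r_ge_1] by simp
  also have "\<dots> \<le> form_max r A * power_sum r A (\<lambda>a. z (Inl a)) + form_max r A * power_sum r B (\<lambda>b. z (Inr b))"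
    using A.edge_form_le_form_max_power_sum[OF nonneg(1)] bound[OF nonneg(2)] by (rule add_mono)
  also have "\<dots> = form_max r A"
    using z(1) power_sum_dunion[OF A.finite_verts finB]
    by (simp add: nonneg_unit_vectors_def distrib_left[symmetric])
  finally show "form_max r (dunion A B) \<le> form_max r A" .
  show "form_max r A \<le> form_max r (dunion A B)"
    using uniform_dunion[OF A.uniform B]
    by (rule A.form_max_le_embedding) (auto simp: verts_dunion edges_dunion)
qed

lemma (in nonempty_uniform_hg) edge_form_copies_le:
  assumes c: "form_max r K \<le> c" and nonneg: "\<And>i. i \<in> verts (copies k K) \<Longrightarrow> 0 \<le> y i"
  shows "edge_form (copies k K) y \<le> c * power_sum r (copies k K) y"
proof -
  have "edge_form K (\<lambda>x. y (i, x)) \<le> c * power_sum r K (\<lambda>x. y (i, x))" if "i < k" for i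
  proof -
    have "\<And>x. x \<in> verts K \<Longrightarrow> 0 \<le> y (i, x)" using nonneg that by (simp add: verts_copies)
    hence "edge_form K (\<lambda>x. y (i, x)) \<le> form_max r K * power_sum r K (\<lambda>x. y (i, x))"
      and "0 \<le> power_sum r K (\<lambda>x. y (i, x))"
      by (simp_all add: edge_form_le_form_max_power_sum power_sum_nonneg)
    thus ?thesis using c by (meson mult_right_mono order_trans)
  qed
  hence "(\<Sum>i<k. edge_form K (\<lambda>x. y (i, x))) \<le> (\<Sum>i<k. c * power_sum r K (\<lambda>x. y (i, x)))"
    by (intro sum_mono) simp
  thus ?thesis by (simp add: edge_form_copies[OF uniform r_ge_1] power_sum_copies sum_distrib_left)
qed

lemma exists_ratio_ge_mean:
  fixes a b :: "'i \<Rightarrow> real"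
  assumes "finite I" and sums: "(\<Sum>k\<in>I. a k) = c * (\<Sum>k\<in>I. b k)" and pos: "0 < (\<Sum>k\<in>I. b k)"
    and nonneg: "\<And>k. k \<in> I \<Longrightarrow> 0 \<le> b k" and zero: "\<And>k. k \<in> I \<Longrightarrow> b k = 0 \<Longrightarrow> a k \<le> 0"
  shows "\<exists>k\<in>I. 0 < b k \<and> c * b k \<le> a k"
proof (rule ccontr)
  assume "\<not> ?thesis"
  hence less: "\<And>k. k \<in> I \<Longrightarrow> 0 < b k \<Longrightarrow> a k < c * b k" by force
  hence le: "\<And>k. k \<in> I \<Longrightarrow> a k \<le> c * b k"
    using nonneg zero by (metis less_eq_real_def mult_zero_right)
  obtain k where "k \<in> I" "0 < b k"
    using pos nonneg by (metis less_eq_real_def sum_nonpos not_le)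
  hence "(\<Sum>k\<in>I. a k) < (\<Sum>k\<in>I. c * b k)"
    using \<open>finite I\<close> le less by (intro sum_strict_mono_ex1) auto
  thus False using sums by (simp add: sum_distrib_left)
qed

locale coalescence =
  fixes r :: nat and G :: "'a hgraph" and u :: 'a and H :: "'b hgraph" and v :: 'b and m :: nat
  assumes uniform_G: "uniform_hg r G" and uniform_H: "uniform_hg r H" and r_ge_2: "2 \<le> r"
    and u_vert: "u \<in> verts G" and v_vert: "v \<in> verts H" and m_pos: "0 < m"
begin

sublocale G: nonempty_uniform_hg r G
  using uniform_G r_ge_2 u_vert by unfold_locales auto

sublocale H: nonempty_uniform_hg r H
  using uniform_H r_ge_2 v_vert by unfold_locales auto

sublocale GH: nonempty_uniform_hg r "coalesce r G u m H v"
  using uniform_coalesce[OF uniform_G uniform_H r_ge_2 u_vert v_vert] r_ge_2 u_vert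
  by unfold_locales (auto simp: verts_coalesce)

sublocale HG: nonempty_uniform_hg r "coalesce r H v m G u"
  using uniform_coalesce[OF uniform_H uniform_G r_ge_2 v_vert u_vert] r_ge_2 v_vert
  by unfold_locales (auto simp: verts_coalesce)

lemma form_max_le_form_max_coalesce: "form_max r G \<le> form_max r (coalesce r G u m H v)"
  using GH.uniform by (rule G.form_max_le_embedding) (auto simp: verts_coalesce edges_coalesce)

definition branch_form :: "('a + (nat \<times> 'b) + (nat \<times> nat) \<Rightarrow> real) \<Rightarrow> nat \<Rightarrow> real" where
  "branch_form y k = edge_form G (\<lambda>g. y (Inl g)) / m + edge_form H (\<lambda>h. y (Inr (Inl (k, h))))
     + y (Inl u) * y (Inr (Inl (k, v))) * (\<Prod>j\<in>{2..r-1}. y (Inr (Inr (k, j))))"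

definition branch_power_sum :: "('a + (nat \<times> 'b) + (nat \<times> nat) \<Rightarrow> real) \<Rightarrow> nat \<Rightarrow> real" where
  "branch_power_sum y k = power_sum r G (\<lambda>g. y (Inl g)) / m + power_sum r H (\<lambda>h. y (Inr (Inl (k, h))))
     + (\<Sum>j\<in>{2..r-1}. y (Inr (Inr (k, j))) ^ r)"

lemma sum_branch_form: "(\<Sum>k<m. branch_form y k) = edge_form (coalesce r G u m H v) y"
  using m_pos by (simp add: branch_form_def edge_form_coalesce[OF uniform_G uniform_H G.r_ge_1]
      sum.distrib add.assoc)

lemma sum_branch_power_sum: "(\<Sum>k<m. branch_power_sum y k) = power_sum r (coalesce r G u m H v) y"
  using m_pos by (simp add: branch_power_sum_def power_sum_coalesce[OF G.finite_verts H.finite_verts]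
      sum.distrib add.assoc)

lemma branch_power_sum_nonneg:
  assumes "\<And>x. x \<in> verts (coalesce r G u m H v) \<Longrightarrow> 0 \<le> y x" and "k < m"
  shows "0 \<le> branch_power_sum y k"
  unfolding branch_power_sum_def using assms
  by (intro add_nonneg_nonneg divide_nonneg_nonneg power_sum_nonneg sum_nonneg zero_le_power)
     (auto simp: verts_coalesce)

lemma branch_form_nonpos:
  assumes nonneg: "\<And>x. x \<in> verts (coalesce r G u m H v) \<Longrightarrow> 0 \<le> y x" and k: "k < m"
    and zero: "branch_power_sum y k = 0"
  shows "branch_form y k \<le> 0"
proof -
  have nonneg_G: "\<And>g. g \<in> verts G \<Longrightarrow> 0 \<le> y (Inl g)"
    and nonneg_H: "\<And>h. h \<in> verts H \<Longrightarrow> 0 \<le> y (Inr (Inl (k, h)))"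
    using nonneg k by (auto simp: verts_coalesce)
  have "0 \<le> (\<Sum>j\<in>{2..r-1}. y (Inr (Inr (k, j))) ^ r)"
    using nonneg k by (intro sum_nonneg zero_le_power) auto
  moreover have "0 \<le> power_sum r G (\<lambda>g. y (Inl g)) / m" "0 \<le> power_sum r H (\<lambda>h. y (Inr (Inl (k, h))))"
    using nonneg_G nonneg_H by (simp_all add: power_sum_nonneg)
  ultimately have "power_sum r G (\<lambda>g. y (Inl g)) / m = 0" and H0: "power_sum r H (\<lambda>h. y (Inr (Inl (k, h)))) = 0"
    using zero unfolding branch_power_sum_def by linarith+
  hence G0: "power_sum r G (\<lambda>g. y (Inl g)) = 0" using m_pos by simp
  have "0 \<le> y (Inl u) ^ r" "y (Inl u) ^ r \<le> power_sum r G (\<lambda>g. y (Inl g))"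
    unfolding power_sum_def using u_vert nonneg_G G.finite_verts by (auto intro: member_le_sum)
  hence "y (Inl u) ^ r = 0" using G0 by linarith
  hence "y (Inl u) = 0" by simp
  moreover have "edge_form G (\<lambda>g. y (Inl g)) \<le> 0"
    using G.edge_form_le_form_max_power_sum[of "\<lambda>g. y (Inl g)", OF nonneg_G] G0 by simp
  hence "edge_form G (\<lambda>g. y (Inl g)) / m \<le> 0" by (simp add: divide_nonpos_nonneg)
  moreover have "edge_form H (\<lambda>h. y (Inr (Inl (k, h)))) \<le> 0"
    using H.edge_form_le_form_max_power_sum[of "\<lambda>h. y (Inr (Inl (k, h)))", OF nonneg_H] H0 by simp
  ultimately show ?thesis by (simp add: branch_form_def)
qed

text \<open>The \<open>k\<close>-th branch of \<open>y\<close> becomes the centre, scaled by \<open>m\<^sup>1\<^sup>/\<^sup>r\<close>, and the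
  centre of \<open>y\<close> is copied into all \<open>m\<close> branches, scaled by \<open>m\<^sup>-\<^sup>1\<^sup>/\<^sup>r\<close>; as both forms
  are \<open>r\<close>-homogeneous, this multiplies the share of the \<open>k\<close>-th branch by \<open>m\<close>.\<close>
definition branch_swap ::
    "('a + (nat \<times> 'b) + (nat \<times> nat) \<Rightarrow> real) \<Rightarrow> nat \<Rightarrow> 'b + (nat \<times> 'a) + (nat \<times> nat) \<Rightarrow> real" where
  "branch_swap y k x = (case x of
      Inl h \<Rightarrow> root r m * y (Inr (Inl (k, h)))
    | Inr (Inl (i, g)) \<Rightarrow> inverse (root r m) * y (Inl g)
    | Inr (Inr (i, j)) \<Rightarrow> y (Inr (Inr (k, j))))"

lemma root_m_pos: "0 < root r m"
  using m_pos r_ge_2 by simp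

lemma root_m_power: "root r m ^ r = m" "inverse (root r m) ^ r = inverse m"
  using m_pos r_ge_2 by (auto simp: real_root_pow_pos2 power_inverse)

lemma edge_form_branch_swap: "edge_form (coalesce r H v m G u) (branch_swap y k) = m * branch_form y k"
proof -
  have "edge_form (coalesce r H v m G u) (branch_swap y k)
     = m * edge_form H (\<lambda>h. y (Inr (Inl (k, h))))
       + m * (inverse m * edge_form G (\<lambda>g. y (Inl g))
           + y (Inr (Inl (k, v))) * y (Inl u) * (\<Prod>j\<in>{2..r-1}. y (Inr (Inr (k, j)))))"
    unfolding edge_form_coalesce[OF uniform_H uniform_G G.r_ge_1] using root_m_pos root_m_power
    by (simp add: branch_swap_def edge_form_scale[OF uniform_H] edge_form_scale[OF uniform_G])
  thus ?thesis using m_pos by (simp add: branch_form_def field_simps)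
qed

lemma power_sum_branch_swap:
  "power_sum r (coalesce r H v m G u) (branch_swap y k) = m * branch_power_sum y k"
proof -
  have "power_sum r (coalesce r H v m G u) (branch_swap y k)
     = m * power_sum r H (\<lambda>h. y (Inr (Inl (k, h))))
       + m * (inverse m * power_sum r G (\<lambda>g. y (Inl g)) + (\<Sum>j\<in>{2..r-1}. y (Inr (Inr (k, j))) ^ r))"
    unfolding power_sum_coalesce[OF H.finite_verts G.finite_verts] using root_m_power
    by (simp add: branch_swap_def power_sum_scale)
  thus ?thesis using m_pos by (simp add: branch_power_sum_def field_simps)
qed

lemma branch_swap_nonneg:
  assumes "\<And>x. x \<in> verts (coalesce r G u m H v) \<Longrightarrow> 0 \<le> y x" and "k < m"
    and "x \<in> verts (coalesce r H v m G u)"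
  shows "0 \<le> branch_swap y k x"
  using assms root_m_pos by (auto simp: verts_coalesce branch_swap_def)

lemma form_max_coalesce_le: "form_max r (coalesce r G u m H v) \<le> form_max r (coalesce r H v m G u)"
proof -
  obtain y where y: "y \<in> nonneg_unit_vectors r (coalesce r G u m H v)"
    "edge_form (coalesce r G u m H v) y = form_max r (coalesce r G u m H v)"
    by (rule GH.form_max_attained)
  have nonneg: "\<And>x. x \<in> verts (coalesce r G u m H v) \<Longrightarrow> 0 \<le> y x"
    using y(1) by (simp add: nonneg_unit_vectors_def)
  have "\<exists>k\<in>{..<m}. 0 < branch_power_sum y k
      \<and> form_max r (coalesce r G u m H v) * branch_power_sum y k \<le> branch_form y k"
    using y branch_power_sum_nonneg[OF nonneg] branch_form_nonpos[OF nonneg]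
    by (intro exists_ratio_ge_mean) (simp_all add: sum_branch_form sum_branch_power_sum nonneg_unit_vectors_def)
  then obtain k where k: "k < m" "0 < branch_power_sum y k"
    "form_max r (coalesce r G u m H v) * branch_power_sum y k \<le> branch_form y k" by blast
  have "edge_form (coalesce r H v m G u) (branch_swap y k)
      \<le> form_max r (coalesce r H v m G u) * power_sum r (coalesce r H v m G u) (branch_swap y k)"
    using branch_swap_nonneg[OF nonneg k(1)] by (rule HG.edge_form_le_form_max_power_sum)
  hence "m * branch_form y k \<le> form_max r (coalesce r H v m G u) * (m * branch_power_sum y k)"
    by (simp only: edge_form_branch_swap power_sum_branch_swap)
  moreover have "m * (form_max r (coalesce r G u m H v) * branch_power_sum y k) \<le> m * branch_form y k"
    using k(3) by (intro mult_left_mono) simp_all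
  ultimately have "form_max r (coalesce r G u m H v) * (m * branch_power_sum y k)
      \<le> form_max r (coalesce r H v m G u) * (m * branch_power_sum y k)"
    by (simp add: mult_ac)
  moreover have "0 < m * branch_power_sum y k" using k(2) m_pos by simp
  ultimately show ?thesis by (rule mult_right_le_imp_le)
qed

end

section \<open>Matchings\<close>

definition matchings :: "'c hgraph \<Rightarrow> nat \<Rightarrow> 'c set set set" where
  "matchings K k = {M. M \<subseteq> edges K \<and> card M = k \<and> (\<forall>e\<in>M. \<forall>f\<in>M. e \<noteq> f \<longrightarrow> e \<inter> f = {})}"

lemma match_count_eq_card_matchings: "match_count K k = card (matchings K k)"
  by (simp add: match_count_def matchings_def)

lemma matching_disjoint: "M \<in> matchings K k \<Longrightarrow> e \<in> M \<Longrightarrow> f \<in> M \<Longrightarrow> e \<noteq> f \<Longrightarrow> e \<inter> f = {}"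
  by (simp add: matchings_def)

lemma image_matching_in_matchings:
  assumes M: "M \<in> matchings K k" and f: "inj f" and edges: "\<And>e. e \<in> M \<Longrightarrow> f ` e \<in> edges L"
  shows "(\<lambda>e. f ` e) ` M \<in> matchings L k"
proof -
  have "inj_on (\<lambda>e. f ` e) M" using f by (meson inj_image_eq_iff inj_onI)
  hence "card ((\<lambda>e. f ` e) ` M) = k" using M by (simp add: matchings_def card_image)
  moreover have "f ` e \<inter> f ` e' = {}" if "e \<in> M" "e' \<in> M" "f ` e \<noteq> f ` e'" for e e'
  proof -
    have "e \<noteq> e'" using that(3) by blast
    hence "e \<inter> e' = {}" using M that(1,2) by (simp add: matching_disjoint)
    thus ?thesis by (simp add: image_Int[OF f, symmetric])
  qed
  ultimately show ?thesis using edges by (auto simp: matchings_def)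
qed

lemma edges_dunionI:
  "X \<in> edges A \<Longrightarrow> Inl ` X \<in> edges (dunion A B)"
  "Y \<in> edges B \<Longrightarrow> Inr ` Y \<in> edges (dunion A B)"
  unfolding edges_dunion by auto

lemma edges_copiesI: "k < n \<Longrightarrow> f \<in> edges K \<Longrightarrow> Pair k ` f \<in> edges (copies n K)"
  unfolding edges_copies by auto

lemma edges_coalesceI:
  "f \<in> edges G \<Longrightarrow> Inl ` f \<in> edges (coalesce r G u m H v)"
  "i < m \<Longrightarrow> f' \<in> edges H \<Longrightarrow> (\<lambda>h. Inr (Inl (i, h))) ` f' \<in> edges (coalesce r G u m H v)"
  "i < m \<Longrightarrow> bridge_edge r u v i \<in> edges (coalesce r G u m H v)"
  unfolding edges_coalesce by auto

definition skip :: "nat \<Rightarrow> nat \<Rightarrow> nat" where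
  "skip i k = (if k < i then k else Suc k)"

definition unskip :: "nat \<Rightarrow> nat \<Rightarrow> nat" where
  "unskip i k = (if k < i then k else k - 1)"

text \<open>A relabelling of \<open>(\<G>\<^sub>u\<cdot>m\<H>\<^sub>v) \<union> (m-1)\<G>\<close> onto \<open>(\<H>\<^sub>v\<cdot>m\<G>\<^sub>u) \<union> (m-1)\<H>\<close>: the
  \<open>i\<close>-th copy of \<open>\<H>\<close> becomes the centre, the centre \<open>\<G>\<close> becomes the \<open>i\<close>-th branch, the
  other copies of \<open>\<H>\<close> become the loose copies and vice versa. It maps every edge except the
  bridges \<open>e\<^sub>j\<close>, \<open>j \<noteq> i\<close>, to an edge.\<close>
definition swap_centre :: "nat \<Rightarrow> ('a + (nat \<times> 'b) + (nat \<times> nat)) + (nat \<times> 'a)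
    \<Rightarrow> ('b + (nat \<times> 'a) + (nat \<times> nat)) + (nat \<times> 'b)" where
  "swap_centre i x = (case x of
      Inl (Inl g) \<Rightarrow> Inl (Inr (Inl (i, g)))
    | Inl (Inr (Inl (k, h))) \<Rightarrow> (if k = i then Inl (Inl h) else Inr (unskip i k, h))
    | Inl (Inr (Inr p)) \<Rightarrow> Inl (Inr (Inr p))
    | Inr (k, g) \<Rightarrow> Inl (Inr (Inl (skip i k, g))))"

lemma swap_centre_simps [simp]:
  "swap_centre i (Inl (Inl g)) = Inl (Inr (Inl (i, g)))"
  "swap_centre i (Inl (Inr (Inl (k, h)))) = (if k = i then Inl (Inl h) else Inr (unskip i k, h))"
  "swap_centre i (Inl (Inr (Inr p))) = Inl (Inr (Inr p))"
  "swap_centre i (Inr (k, g)) = Inl (Inr (Inl (skip i k, g)))"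
  by (simp_all add: swap_centre_def)

lemma swap_centre_swap_centre [simp]: "swap_centre i (swap_centre i x) = x"
proof -
  consider g where "x = Inl (Inl g)" | k h where "x = Inl (Inr (Inl (k, h)))"
    | p where "x = Inl (Inr (Inr p))" | k g where "x = Inr (k, g)"
    by (metis obj_sumE surj_pair)
  thus ?thesis by cases (auto simp: skip_def unskip_def)
qed

lemma inj_swap_centre: "inj (swap_centre i)"
  by (metis injI swap_centre_swap_centre)

lemma image_swap_centre_image [simp]: "swap_centre i ` swap_centre i ` A = A"
  by (simp add: image_comp comp_def)

lemma swap_centre_bridge_edge: "swap_centre i ` Inl ` bridge_edge r u v i = Inl ` bridge_edge r v u i"
  by (simp add: bridge_edge_def image_Un image_image insert_commute)

context coalescence
begin

abbreviation union_GH :: "(('a + (nat \<times> 'b) + (nat \<times> nat)) + (nat \<times> 'a)) hgraph" where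
  "union_GH \<equiv> dunion (coalesce r G u m H v) (copies (m - 1) G)"

abbreviation union_HG :: "(('b + (nat \<times> 'a) + (nat \<times> nat)) + (nat \<times> 'b)) hgraph" where
  "union_HG \<equiv> dunion (coalesce r H v m G u) (copies (m - 1) H)"

abbreviation bridge :: "nat \<Rightarrow> (('a + (nat \<times> 'b) + (nat \<times> nat)) + (nat \<times> 'a)) set" where
  "bridge i \<equiv> Inl ` bridge_edge r u v i"

lemma edges_union_cases:
  assumes "e \<in> edges union_GH"
  obtains (G) f where "f \<in> edges G" and "e = Inl ` Inl ` f"
    | (H) i f where "i < m" and "f \<in> edges H" and "e = Inl ` (\<lambda>h. Inr (Inl (i, h))) ` f"
    | (bridge) i where "i < m" and "e = bridge i"
    | (copy) k f where "k < m - 1" and "f \<in> edges G" and "e = Inr ` Pair k ` f"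
  using assms unfolding edges_dunion
proof (elim UnE imageE)
  fix X assume X: "X \<in> edges (coalesce r G u m H v)" and e: "e = Inl ` X"
  from X show thesis
  proof (cases rule: coalesce_edge_cases)
    case (G f) thus thesis using e that(1) by blast
  next
    case (H i f) thus thesis using e that(2) by blast
  next
    case (bridge i) thus thesis using e that(3) by blast
  qed
next
  fix X assume "X \<in> edges (copies (m - 1) G)" and "e = Inr ` X"
  thus thesis using copy unfolding edges_copies by blast
qed

lemma swap_centre_edge:
  assumes i: "i < m" and e: "e \<in> edges union_GH"
    and not_bridge: "\<And>j. j < m \<Longrightarrow> j \<noteq> i \<Longrightarrow> e \<noteq> bridge j"
  shows "swap_centre i ` e \<in> edges union_HG"
  using e
proof (cases rule: edges_union_cases)
  case (G f)
  have "swap_centre i ` e = Inl ` (\<lambda>g. Inr (Inl (i, g))) ` f" using G(2) by (simp add: image_image)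
  moreover have "\<dots> \<in> edges union_HG"
    by (rule edges_dunionI(1)[OF edges_coalesceI(2)[OF i G(1)]])
  ultimately show ?thesis by (simp only:)
next
  case (H k f)
  show ?thesis
  proof (cases "k = i")
    case True
    hence "swap_centre i ` e = Inl ` Inl ` f" using H(3) by (simp add: image_image)
    moreover have "\<dots> \<in> edges union_HG"
      by (rule edges_dunionI(1)[OF edges_coalesceI(1)[OF H(2)]])
    ultimately show ?thesis by (simp only:)
  next
    case False
    hence "swap_centre i ` e = Inr ` Pair (unskip i k) ` f" using H(3) by (simp add: image_image)
    moreover have "unskip i k < m - 1" using i H(1) False by (auto simp: unskip_def)
    hence "Inr ` Pair (unskip i k) ` f \<in> edges union_HG"
      by (rule edges_dunionI(2)[OF edges_copiesI[OF _ H(2)]])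
    ultimately show ?thesis by (simp only:)
  qed
next
  case (bridge j)
  hence "swap_centre i ` e = Inl ` bridge_edge r v u i" using not_bridge by (metis swap_centre_bridge_edge)
  moreover have "\<dots> \<in> edges union_HG"
    by (rule edges_dunionI(1)[OF edges_coalesceI(3)[OF i]])
  ultimately show ?thesis by (simp only:)
next
  case (copy k f)
  hence "swap_centre i ` e = Inl ` (\<lambda>g. Inr (Inl (skip i k, g))) ` f" by (simp add: image_image)
  moreover have "skip i k < m" using i copy(1) by (auto simp: skip_def)
  hence "Inl ` (\<lambda>g. Inr (Inl (skip i k, g))) ` f \<in> edges union_HG"
    by (rule edges_dunionI(1)[OF edges_coalesceI(2)[OF _ copy(2)]])
  ultimately show ?thesis by (simp only:)
qed

definition bridge_index :: "(('a + (nat \<times> 'b) + (nat \<times> nat)) + (nat \<times> 'a)) set set \<Rightarrow> nat" where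
  "bridge_index M = (if \<exists>i<m. bridge i \<in> M
     then THE i. i < m \<and> bridge i \<in> M else 0)"

lemma bridge_in_matching_unique:
  assumes M: "M \<in> matchings union_GH k"
    and "bridge i \<in> M" and "bridge j \<in> M"
  shows "i = j"
proof (rule ccontr)
  assume "i \<noteq> j"
  hence "bridge i \<noteq> bridge j"
    using inj_bridge_edge by (metis inj_image_eq_iff inj_Inl injD)
  hence "bridge i \<inter> bridge j = {}"
    using matching_disjoint[OF M assms(2,3)] by blast
  moreover have "Inl (Inl u) \<in> bridge i \<inter> bridge j"
    by (simp add: bridge_edge_def)
  ultimately show False by blast
qed

lemma bridge_index_eq:
  assumes M: "M \<in> matchings union_GH k" and j: "j < m" "bridge j \<in> M"
  shows "bridge_index M = j"
proof -
  have "(THE i. i < m \<and> bridge i \<in> M) = j"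
    using j bridge_in_matching_unique[OF M] by (intro the_equality) auto
  thus ?thesis using j by (auto simp: bridge_index_def)
qed

lemma bridge_index_less:
  assumes "M \<in> matchings union_GH k"
  shows "bridge_index M < m"
proof (cases "\<exists>j<m. bridge j \<in> M")
  case True
  then obtain j where "j < m" "bridge j \<in> M" by blast
  thus ?thesis using bridge_index_eq[OF assms] by simp
next
  case False
  hence "bridge_index M = 0" unfolding bridge_index_def by (rule if_not_P)
  thus ?thesis using m_pos by simp
qed

definition swap_matching :: "(('a + (nat \<times> 'b) + (nat \<times> nat)) + (nat \<times> 'a)) set set
    \<Rightarrow> (('b + (nat \<times> 'a) + (nat \<times> nat)) + (nat \<times> 'b)) set set" where
  "swap_matching M = (\<lambda>e. swap_centre (bridge_index M) ` e) ` M"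

lemma swap_matching_in_matchings:
  assumes M: "M \<in> matchings union_GH k"
  shows "swap_matching M \<in> matchings union_HG k"
  unfolding swap_matching_def using M inj_swap_centre
proof (rule image_matching_in_matchings)
  fix e assume e: "e \<in> M"
  hence "e \<in> edges union_GH"
    using M by (auto simp: matchings_def)
  thus "swap_centre (bridge_index M) ` e \<in> edges union_HG"
  proof (rule swap_centre_edge[OF bridge_index_less[OF M]])
    fix j assume "j < m" and "j \<noteq> bridge_index M"
    thus "e \<noteq> bridge j" using bridge_index_eq[OF M] e by blast
  qed
qed

text \<open>For \<open>j\<close> other than the bridge index, the preimage of \<open>e\<^sub>j\<close> would meet both the
  coalescence and the loose copies, so it is not an edge.\<close>
lemma bridge_in_swap_matching_iff:
  assumes M: "M \<in> matchings union_GH k" and j: "j < m"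
  shows "Inl ` bridge_edge r v u j \<in> swap_matching M \<longleftrightarrow> bridge j \<in> M"
proof
  assume "bridge j \<in> M"
  moreover from this have "j = bridge_index M" using bridge_index_eq[OF M j] by simp
  ultimately show "Inl ` bridge_edge r v u j \<in> swap_matching M"
    unfolding swap_matching_def by (metis swap_centre_bridge_edge image_eqI)
next
  let ?c = "bridge_index M"
  assume "Inl ` bridge_edge r v u j \<in> swap_matching M"
  then obtain e where "e \<in> M" and "Inl ` bridge_edge r v u j = swap_centre ?c ` e"
    unfolding swap_matching_def by blast
  hence e: "e \<in> M" "e = swap_centre ?c ` Inl ` bridge_edge r v u j" by simp_all
  show "bridge j \<in> M"
  proof (cases "j = ?c")
    case True
    thus ?thesis using e by (simp add: swap_centre_bridge_edge)
  next
    case False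
    have e_edge: "e \<in> edges union_GH"
      using M e(1) by (auto simp: matchings_def)
    have "swap_centre ?c (Inl (Inl v)) \<in> e" "swap_centre ?c (Inl (Inr (Inl (j, u)))) \<in> e"
      unfolding e(2) by (intro imageI; simp add: bridge_edge_def)+
    hence "Inl (Inr (Inl (?c, v))) \<in> e" "Inr (unskip ?c j, u) \<in> e" using False by simp_all
    thus ?thesis using edge_dunion_not_mixed[OF e_edge] by blast
  qed
qed

lemma inj_on_swap_matching: "inj_on swap_matching (matchings union_GH k)"
proof (rule inj_onI)
  fix M1 M2
  assume M: "M1 \<in> matchings union_GH k" "M2 \<in> matchings union_GH k"
    and eq: "swap_matching M1 = swap_matching M2"
  have same: "\<And>j. j < m \<Longrightarrow> bridge j \<in> M1 \<longleftrightarrow> bridge j \<in> M2"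
    using bridge_in_swap_matching_iff[OF M(1)] bridge_in_swap_matching_iff[OF M(2)] eq by auto
  have "bridge_index M1 = bridge_index M2"
  proof (cases "\<exists>j<m. bridge j \<in> M1")
    case True
    then obtain j where "j < m" "bridge j \<in> M1" by blast
    thus ?thesis using same bridge_index_eq[OF M(1)] bridge_index_eq[OF M(2)] by metis
  next
    case False
    moreover from this have "\<not> (\<exists>j<m. bridge j \<in> M2)" using same by blast
    ultimately show ?thesis unfolding bridge_index_def by (simp only: if_False)
  qed
  hence "(\<lambda>e. swap_centre (bridge_index M1) ` e) ` M1 = (\<lambda>e. swap_centre (bridge_index M1) ` e) ` M2"
    using eq by (simp add: swap_matching_def)
  hence "(\<lambda>e. swap_centre (bridge_index M1) ` e) ` (\<lambda>e. swap_centre (bridge_index M1) ` e) ` M1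
      = (\<lambda>e. swap_centre (bridge_index M1) ` e) ` (\<lambda>e. swap_centre (bridge_index M1) ` e) ` M2"
    by (rule arg_cong)
  thus "M1 = M2" by (simp add: image_image)
qed

lemma match_count_union_le: "match_count union_GH k \<le> match_count union_HG k"
proof -
  have "finite (edges union_HG)"
    using uniform_dunion[OF HG.uniform uniform_copies[OF uniform_H]] by (rule uniform_hg_finite_edges)
  hence "finite (matchings union_HG k)"
    by (rule rev_finite_subset[OF finite_Pow_iff[THEN iffD2]]) (auto simp: matchings_def)
  thus ?thesis unfolding match_count_eq_card_matchings
    using inj_on_swap_matching swap_matching_in_matchings by (intro card_inj_on_le) auto
qed

lemma card_verts_union_GH:
  "card (verts union_GH) = m * card (verts G) + m * card (verts H) + m * (r - 2)"
proof -
  have "finite (verts (copies (m - 1) G))" by (simp add: verts_copies G.finite_verts)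
  hence "card (verts union_GH) = card (verts G) + m * card (verts H) + m * (r - 2) + (m - 1) * card (verts G)"
    by (simp add: card_verts_dunion GH.finite_verts card_verts_coalesce G.finite_verts H.finite_verts
        card_verts_copies)
  also have "\<dots> = m * card (verts G) + m * card (verts H) + m * (r - 2)"
    using m_pos by (cases m) simp_all
  finally show ?thesis .
qed

sublocale union: nonempty_uniform_hg r union_GH
  using uniform_dunion[OF GH.uniform uniform_copies[OF uniform_G]] r_ge_2 GH.verts_nonempty
  by unfold_locales (auto simp: verts_dunion)

lemma form_max_union_GH: "form_max r union_GH = form_max r (coalesce r G u m H v)"
  using GH.nonempty_uniform_hg_axioms uniform_copies[OF uniform_G]
proof (rule form_max_dunion_eq)
  fix y :: "nat \<times> 'a \<Rightarrow> real" assume "\<And>i. i \<in> verts (copies (m - 1) G) \<Longrightarrow> 0 \<le> y i"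
  with form_max_le_form_max_coalesce
  show "edge_form (copies (m - 1) G) y
      \<le> form_max r (coalesce r G u m H v) * power_sum r (copies (m - 1) G) y"
    by (rule G.edge_form_copies_le)
qed

lemma spectral_radius_coalesce:
  "spectral_radius r (coalesce r G u m H v) = r * form_max r (coalesce r G u m H v)"
  by (rule GH.spectral_radius_eq_form_max)

lemma spectral_radius_union_GH: "spectral_radius r union_GH = r * form_max r (coalesce r G u m H v)"
  using union.spectral_radius_eq_form_max form_max_union_GH by simp

end

theorem theorem6:
  fixes r m :: nat and G :: "'a hgraph" and H :: "'b hgraph" and u :: 'a and v :: 'b
  assumes "m \<ge> 1" and "r \<ge> 3"
    and "supertree r G" and "supertree r H"
    and "u \<in> verts G" and "v \<in> verts H"
  shows "spectral_radius r (dunion (coalesce r G u m H v) (copies (m - 1) G))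
           = spectral_radius r (dunion (coalesce r H v m G u) (copies (m - 1) H))
         \<and> spectral_radius r (coalesce r G u m H v) = spectral_radius r (coalesce r H v m G u)
         \<and> matching_energy r (dunion (coalesce r G u m H v) (copies (m - 1) G))
           = matching_energy r (dunion (coalesce r H v m G u) (copies (m - 1) H))"
proof -
  interpret GH: coalescence r G u H v m
    using assms by unfold_locales (auto simp: supertree_def)
  interpret HG: coalescence r H v G u m
    using assms by unfold_locales (auto simp: supertree_def)
  have form_max_eq: "form_max r (coalesce r G u m H v) = form_max r (coalesce r H v m G u)"
    using GH.form_max_coalesce_le HG.form_max_coalesce_le by (rule antisym)
  have "match_count GH.union_GH k = match_count HG.union_GH k" for k
    using GH.match_count_union_le HG.match_count_union_le by (rule antisym)
  moreover have "card (verts GH.union_GH) = card (verts HG.union_GH)"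
    unfolding GH.card_verts_union_GH HG.card_verts_union_GH by simp
  ultimately have "matching_poly r GH.union_GH = matching_poly r HG.union_GH"
    unfolding matching_poly_def by simp
  thus ?thesis
    using form_max_eq GH.spectral_radius_union_GH HG.spectral_radius_union_GH
      GH.spectral_radius_coalesce HG.spectral_radius_coalesce
    by (simp add: matching_energy_def)
qed

end
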